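(* Let $S$ and $T$ be semigroups and let $S\ast T$ be their semigroup free product. Then $S\ast T$ is $U(\mathrm{CF})$ if and only if both $S$ and $T$ are $U(\mathrm{CF})$. (That is, the class of $U(\mathrm{CF})$ semigroups is closed under semigroup free products and under taking free factors.)
   Context: For a semigroup $S$ generated by a finite set $A$, $\mathrm{WP}(S,A)=\{u\#v^{\mathrm{rev}} : u,v\in A^+,\ u=_S v\}$, where $\#\notin A$ and $v^{\mathrm{rev}}$ is the reversal of $v$. A semigroup is $U(\mathrm{CF})$ if it is finitely generated and its word problem with respect to some (equivalently any) finite generating set is context-free. *)

theory Defs
  imports Main
begin

record 'a sgrp =
  carr :: "'a set"
  mul  :: "'a \<Rightarrow> 'a \<Rightarrow> 'a"

definition semigrp :: "'a sgrp \<Rightarrow> bool" where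
  "semigrp S \<longleftrightarrow>
     (\<forall>x\<in>carr S. \<forall>y\<in>carr S. mul S x y \<in> carr S) \<and>
     (\<forall>x\<in>carr S. \<forall>y\<in>carr S. \<forall>z\<in>carr S. mul S (mul S x y) z = mul S x (mul S y z))"

definition word_eval :: "'a sgrp \<Rightarrow> 'a list \<Rightarrow> 'a" where
  "word_eval S w = foldl (mul S) (hd w) (tl w)"

definition generates :: "'a sgrp \<Rightarrow> 'a set \<Rightarrow> bool" where
  "generates S A \<longleftrightarrow> A \<subseteq> carr S \<and>
     (\<forall>s\<in>carr S. \<exists>w. w \<noteq> [] \<and> set w \<subseteq> A \<and> word_eval S w = s)"

text \<open>A grammar is a set of productions (A, alpha), nonterminals Inl, terminals Inr.\<close>
definition cfg_step :: "('n \<times> ('n + 't) list) set \<Rightarrow> ('n + 't) list \<Rightarrow> ('n + 't) list \<Rightarrow> bool" where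
  "cfg_step P u v \<longleftrightarrow> (\<exists>l A r \<alpha>. u = l @ [Inl A] @ r \<and> (A, \<alpha>) \<in> P \<and> v = l @ \<alpha> @ r)"

definition cfg_lang :: "('n \<times> ('n + 't) list) set \<Rightarrow> 'n \<Rightarrow> 't list set" where
  "cfg_lang P S0 = {w. (cfg_step P)\<^sup>*\<^sup>* [Inl S0] (map Inr w)}"

text \<open>Context-free: generated by a finite grammar (nonterminals w.l.o.g. natural numbers).\<close>
definition context_free :: "'t list set \<Rightarrow> bool" where
  "context_free L \<longleftrightarrow> (\<exists>(P :: (nat \<times> (nat + 't) list) set) S0. finite P \<and> cfg_lang P S0 = L)"

text \<open>Alphabet A with the extra symbol # encoded as None.\<close>
definition WP :: "'a sgrp \<Rightarrow> 'a set \<Rightarrow> 'a option list set" where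
  "WP S A = {map Some u @ [None] @ rev (map Some v) | u v.
               u \<noteq> [] \<and> v \<noteq> [] \<and> set u \<subseteq> A \<and> set v \<subseteq> A \<and> word_eval S u = word_eval S v}"

definition U_CF :: "'a sgrp \<Rightarrow> bool" where
  "U_CF S \<longleftrightarrow> (\<exists>A. finite A \<and> generates S A \<and> context_free (WP S A))"

section \<open>Semigroup free product (normal forms: nonempty alternating sequences)\<close>

definition fp_carr :: "'a sgrp \<Rightarrow> 'b sgrp \<Rightarrow> ('a + 'b) list set" where
  "fp_carr S T = {xs. xs \<noteq> [] \<and>
      (\<forall>x\<in>set xs. case x of Inl a \<Rightarrow> a \<in> carr S | Inr b \<Rightarrow> b \<in> carr T) \<and>
      (\<forall>i. Suc i < length xs \<longrightarrow> isl (xs ! i) \<noteq> isl (xs ! Suc i))}"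

definition fp_mul :: "'a sgrp \<Rightarrow> 'b sgrp \<Rightarrow> ('a + 'b) list \<Rightarrow> ('a + 'b) list \<Rightarrow> ('a + 'b) list" where
  "fp_mul S T xs ys =
     (if xs = [] then ys else if ys = [] then xs else
      (case (last xs, hd ys) of
         (Inl a, Inl b) \<Rightarrow> butlast xs @ [Inl (mul S a b)] @ tl ys
       | (Inr a, Inr b) \<Rightarrow> butlast xs @ [Inr (mul T a b)] @ tl ys
       | _ \<Rightarrow> xs @ ys))"

definition free_prod :: "'a sgrp \<Rightarrow> 'b sgrp \<Rightarrow> ('a + 'b) list sgrp" where
  "free_prod S T = \<lparr> carr = fp_carr S T, mul = fp_mul S T \<rparr>"

end

theory Submission
  imports Defs "HOL-Library.Countable"
begin

text \<open>Two words over the generators of S * T have the same value iff their first syllables lie in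
  the same factor and are equal there and the remaining words have the same value. Hence an
  instance u # rev v of the word problem of S * T is an instance of the word problem of S or of T
  whose marker is either kept or replaced by a nested instance beginning in the other factor; a
  grammar combining grammars for WP(S) and WP(T), with the markers turned into nonterminals,
  generates exactly these words. Conversely, a product of generators of S * T that lies in S has
  all its factors in S, so WP(S) is the preimage of WP(S * T) under an injective renaming of
  letters, and context-free languages are closed under such preimages.\<close>

section \<open>Context-free grammars\<close>

lemma cfg_step_context: "cfg_step P u v \<Longrightarrow> cfg_step P (l @ u @ r) (l @ v @ r)"
  unfolding cfg_step_def by (metis append.assoc)

lemma cfg_steps_context:
  "(cfg_step P)\<^sup>*\<^sup>* u v \<Longrightarrow> (cfg_step P)\<^sup>*\<^sup>* (l @ u @ r) (l @ v @ r)"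
  by (induction rule: rtranclp_induct) (auto intro: rtranclp.rtrancl_into_rtrancl cfg_step_context)

lemma cfg_steps_append:
  assumes "(cfg_step P)\<^sup>*\<^sup>* u1 v1" and "(cfg_step P)\<^sup>*\<^sup>* u2 v2"
  shows "(cfg_step P)\<^sup>*\<^sup>* (u1 @ u2) (v1 @ v2)"
  using cfg_steps_context[OF assms(1), of "[]" u2] cfg_steps_context[OF assms(2), of v1 "[]"] by simp

lemma cfg_steps_concat:
  "list_all2 (\<lambda>c w. (cfg_step P)\<^sup>*\<^sup>* [g c] (map Inr w)) cs ws
    \<Longrightarrow> (cfg_step P)\<^sup>*\<^sup>* (map g cs) (map Inr (concat ws))"
proof (induction rule: list_all2_induct)
  case (Cons c cs w ws)
  then have "(cfg_step P)\<^sup>*\<^sup>* ([g c] @ map g cs) (map Inr w @ map Inr (concat ws))"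
    by (intro cfg_steps_append)
  then show ?case by simp
qed simp

lemma cfg_step_rule: "(A, \<alpha>) \<in> P \<Longrightarrow> cfg_step P [Inl A] \<alpha>"
  unfolding cfg_step_def by (intro exI[of _ "[]"] exI[of _ A] exI[of _ "[]"] exI[of _ \<alpha>]) simp

lemma relpowp_cfg_step_append_split:
  "(cfg_step P ^^ k) (u1 @ u2) v \<Longrightarrow>
    \<exists>v1 v2 k1 k2. v = v1 @ v2 \<and> (cfg_step P ^^ k1) u1 v1 \<and> (cfg_step P ^^ k2) u2 v2 \<and> k1 + k2 = k"
proof (induction k arbitrary: v)
  case (Suc k)
  then obtain w where w: "(cfg_step P ^^ k) (u1 @ u2) w" "cfg_step P w v"
    by (auto elim: relpowp_Suc_E)
  from Suc.IH[OF w(1)] obtain w1 w2 k1 k2 where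
    h: "w = w1 @ w2" "(cfg_step P ^^ k1) u1 w1" "(cfg_step P ^^ k2) u2 w2" "k1 + k2 = k"
    by blast
  from w(2) obtain l A r \<alpha> where s: "w = l @ [Inl A] @ r" "(A, \<alpha>) \<in> P" "v = l @ \<alpha> @ r"
    unfolding cfg_step_def by blast
  from s(1) h(1) have "l @ [Inl A] @ r = w1 @ w2" by simp
  then have "(\<exists>r1. w1 = l @ [Inl A] @ r1 \<and> r = r1 @ w2) \<or>
      (\<exists>l2. w2 = l2 @ [Inl A] @ r \<and> l = w1 @ l2)"
    by (auto simp: append_eq_append_conv2 Cons_eq_append_conv)
  then consider
      r1 where "w1 = l @ [Inl A] @ r1" "r = r1 @ w2"
    | l2 where "w2 = l2 @ [Inl A] @ r" "l = w1 @ l2"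
    by blast
  then show ?case
  proof cases
    case (1 r1)
    with s have "cfg_step P w1 (l @ \<alpha> @ r1)" unfolding cfg_step_def by blast
    with h(2) have "(cfg_step P ^^ Suc k1) u1 (l @ \<alpha> @ r1)" by auto
    with h 1 s show ?thesis
      by (intro exI[of _ "l @ \<alpha> @ r1"] exI[of _ w2] exI[of _ "Suc k1"] exI[of _ k2]) auto
  next
    case (2 l2)
    with s have "cfg_step P w2 (l2 @ \<alpha> @ r)" unfolding cfg_step_def by blast
    with h(3) have "(cfg_step P ^^ Suc k2) u2 (l2 @ \<alpha> @ r)" by auto
    with h 2 s show ?thesis
      by (intro exI[of _ w1] exI[of _ "l2 @ \<alpha> @ r"] exI[of _ k1] exI[of _ "Suc k2"]) auto
  qed
qed simp

lemma relpowp_cfg_step_terminal: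
  "(cfg_step P ^^ k) (map Inr w) v \<Longrightarrow> v = map Inr w"
proof (induction k arbitrary: v)
  case (Suc k)
  then obtain y where "(cfg_step P ^^ k) (map Inr w) y" "cfg_step P y v"
    by (auto elim: relpowp_Suc_E)
  with Suc.IH have "cfg_step P (map Inr w) v" by auto
  then show ?case
    unfolding cfg_step_def by (metis Inl_Inr_False append_Cons ex_map_conv in_set_conv_decomp)
qed simp

lemma relpowp_cfg_step_terminal_singleton:
  "(cfg_step P ^^ k) [Inr c] (map Inr w) \<Longrightarrow> w = [c]"
  using relpowp_cfg_step_terminal[where w = "[c]"] by (auto simp: map_eq_Cons_conv)

lemma relpowp_cfg_step_nonterminal:
  assumes "(cfg_step P ^^ k) [Inl X] (map Inr w)"
  obtains k' \<alpha> where "k = Suc k'" "(X, \<alpha>) \<in> P" "(cfg_step P ^^ k') \<alpha> (map Inr w)"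
proof (cases k)
  case 0
  with assms show ?thesis by (cases w) auto
next
  case (Suc k')
  with assms obtain y where "cfg_step P [Inl X] y" "(cfg_step P ^^ k') y (map Inr w)"
    using relpowp_Suc_D2 by metis
  moreover from this(1) obtain \<alpha> where "(X, \<alpha>) \<in> P" "y = \<alpha>"
    unfolding cfg_step_def by (auto simp: Cons_eq_append_conv)
  ultimately show ?thesis using Suc that by blast
qed

lemma cfg_steps_map:
  assumes "\<And>n. h (Inl n) = Inl (f n)"
    and "\<And>A \<alpha>. (A, \<alpha>) \<in> P \<Longrightarrow> (f A, map h \<alpha>) \<in> Q"
    and "(cfg_step P)\<^sup>*\<^sup>* u v"
  shows "(cfg_step Q)\<^sup>*\<^sup>* (map h u) (map h v)"
  using assms(3)
proof (induction rule: rtranclp_induct)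
  case (step v w)
  from step.hyps(2) obtain l A r \<alpha> where "v = l @ [Inl A] @ r" "(A, \<alpha>) \<in> P" "w = l @ \<alpha> @ r"
    unfolding cfg_step_def by blast
  with assms(1,2) have "cfg_step Q (map h v) (map h w)"
    unfolding cfg_step_def
    by (intro exI[of _ "map h l"] exI[of _ "f A"] exI[of _ "map h r"] exI[of _ "map h \<alpha>"]) auto
  with step.IH show ?case by simp
qed simp

lemma cfg_steps_vimage:
  fixes h :: "'n + 't \<Rightarrow> 'm + 'u"
  assumes h: "\<And>n. h (Inl n) = Inl (f n)" "\<And>c n. h (Inr c) \<noteq> Inl n"
    and lhs: "\<And>A \<alpha>. (A, \<alpha>) \<in> P \<Longrightarrow> A \<in> range f"
    and "(cfg_step P)\<^sup>*\<^sup>* x (map h y)"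
  shows "\<exists>x'. x = map h x' \<and> (cfg_step {(X, \<beta>). (f X, map h \<beta>) \<in> P})\<^sup>*\<^sup>* x' y"
  using assms(4)
proof (induction rule: converse_rtranclp_induct)
  case (step x x1)
  from step.IH obtain x1' where x1: "x1 = map h x1'"
    "(cfg_step {(X, \<beta>). (f X, map h \<beta>) \<in> P})\<^sup>*\<^sup>* x1' y" by blast
  from step.hyps(1) obtain l A r \<alpha> where s: "x = l @ [Inl A] @ r" "(A, \<alpha>) \<in> P" "x1 = l @ \<alpha> @ r"
    unfolding cfg_step_def by blast
  from s(3) x1(1) have "map h x1' = l @ (\<alpha> @ r)" by simp
  then obtain l' m' where "x1' = l' @ m'" "l = map h l'" "\<alpha> @ r = map h m'"
    using map_eq_append_conv[of h x1' l "\<alpha> @ r"] by blast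
  moreover from this(3) obtain \<alpha>' r' where "m' = \<alpha>' @ r'" "\<alpha> = map h \<alpha>'" "r = map h r'"
    using append_eq_map_conv[of \<alpha> r h m'] by blast
  ultimately have d: "x1' = l' @ \<alpha>' @ r'" "l = map h l'" "\<alpha> = map h \<alpha>'" "r = map h r'"
    by simp_all
  from lhs[OF s(2)] obtain A' where A: "A = f A'" by blast
  with s(2) d(3) have "(A', \<alpha>') \<in> {(X, \<beta>). (f X, map h \<beta>) \<in> P}" by simp
  then have "cfg_step {(X, \<beta>). (f X, map h \<beta>) \<in> P} (l' @ [Inl A'] @ r') x1'"
    unfolding cfg_step_def d(1) by (intro exI[of _ l'] exI[of _ A'] exI[of _ r'] exI[of _ \<alpha>']) simp
  moreover have "x = map h (l' @ [Inl A'] @ r')" using s(1) d h(1) A by simp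
  ultimately show ?case using x1(2)
    by (intro exI[of _ "l' @ [Inl A'] @ r'"]) (simp add: converse_rtranclp_into_rtranclp)
qed blast

lemma cfg_lang_vimage:
  assumes "inj f" "inj g"
    and lhs: "\<And>A \<alpha>. (A, \<alpha>) \<in> P \<Longrightarrow> A \<in> range f"
  shows "cfg_lang {(X, \<beta>). (f X, map (map_sum f g) \<beta>) \<in> P} S0 = {w. map g w \<in> cfg_lang P (f S0)}"
    (is "cfg_lang ?P' S0 = _")
proof (intro set_eqI iffI; simp add: cfg_lang_def)
  fix w assume "(cfg_step ?P')\<^sup>*\<^sup>* [Inl S0] (map Inr w)"
  from cfg_steps_map[of "map_sum f g" f ?P' P, OF _ _ this]
  show "(cfg_step P)\<^sup>*\<^sup>* [Inl (f S0)] (map (Inr \<circ> g) w)" by (simp add: comp_def)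
next
  fix w assume "(cfg_step P)\<^sup>*\<^sup>* [Inl (f S0)] (map (Inr \<circ> g) w)"
  then have "(cfg_step P)\<^sup>*\<^sup>* [Inl (f S0)] (map (map_sum f g) (map Inr w))"
    by (simp add: comp_def)
  then have "\<exists>x'. [Inl (f S0)] = map (map_sum f g) x' \<and> (cfg_step ?P')\<^sup>*\<^sup>* x' (map Inr w)"
    using cfg_steps_vimage[where h = "map_sum f g" and f = f and P = P, OF _ _ lhs] by simp
  then obtain x' where
    x': "[Inl (f S0)] = map (map_sum f g) x'" "(cfg_step ?P')\<^sup>*\<^sup>* x' (map Inr w)"
    by metis
  from x'(1) obtain a where "x' = [a]" "map_sum f g a = Inl (f S0)" by auto
  with \<open>inj f\<close> have "x' = [Inl S0]" by (cases a) (auto simp: inj_eq)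
  with x'(2) show "(cfg_step ?P')\<^sup>*\<^sup>* [Inl S0] (map Inr w)" by simp
qed

lemma context_free_vimage:
  assumes "inj g" and "context_free L"
  shows "context_free {w. map g w \<in> L}"
proof -
  from assms(2) obtain P :: "(nat \<times> (nat + _) list) set" and S0 where P: "finite P" "cfg_lang P S0 = L"
    unfolding context_free_def by blast
  let ?h = "map_prod id (map (map_sum id g))"
  have "inj ?h" using assms(1) by (simp add: prod.inj_map list.inj_map sum.inj_map)
  with P(1) have "finite (?h -` P)" by (rule finite_vimageI)
  moreover have "?h -` P = {(X, \<beta>). (id X, map (map_sum id g) \<beta>) \<in> P}" by auto
  moreover have "cfg_lang \<dots> S0 = {w. map g w \<in> L}"
    using cfg_lang_vimage[of id g P S0] assms(1) P(2) by simp
  ultimately show ?thesis unfolding context_free_def by metis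
qed

lemma context_free_cfg_lang:
  fixes P :: "('n::countable \<times> ('n + 't) list) set"
  assumes "finite P"
  shows "context_free (cfg_lang P S0)"
proof -
  let ?h = "map_prod to_nat (map (map_sum to_nat (id :: 't \<Rightarrow> 't)))"
  have "inj ?h" by (simp add: prod.inj_map list.inj_map sum.inj_map)
  then have "(to_nat X, map (map_sum to_nat id) \<beta>) \<in> ?h ` P \<longleftrightarrow> (X, \<beta>) \<in> P" for X \<beta>
    using inj_image_mem_iff[of ?h "(X, \<beta>)" P] by simp
  then have "{(X, \<beta>). (to_nat X, map (map_sum to_nat id) \<beta>) \<in> ?h ` P} = P" by auto
  then have "cfg_lang P S0 = cfg_lang (?h ` P) (to_nat S0)"
    using cfg_lang_vimage[of to_nat id "?h ` P" S0] by auto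
  with assms show ?thesis unfolding context_free_def by blast
qed

lemma relpowp_cfg_step_map_split:
  "(cfg_step Q ^^ k) (map g cs) (map Inr w) \<Longrightarrow>
    \<exists>ws. list_all2 (\<lambda>c wc. \<exists>j\<le>k. (cfg_step Q ^^ j) [g c] (map Inr wc)) cs ws \<and> w = concat ws"
proof (induction cs arbitrary: k w)
  case Nil
  then show ?case using relpowp_cfg_step_terminal[where w = "[]"] by auto
next
  case (Cons c cs)
  from Cons.prems have "(cfg_step Q ^^ k) ([g c] @ map g cs) (map Inr w)" by simp
  from relpowp_cfg_step_append_split[OF this] obtain v1 v2 k1 k2 where
    split: "map Inr w = v1 @ v2" "(cfg_step Q ^^ k1) [g c] v1" "(cfg_step Q ^^ k2) (map g cs) v2"
      "k1 + k2 = k"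
    by blast
  from split(1) obtain w1 w2 where w: "w = w1 @ w2" "v1 = map Inr w1" "v2 = map Inr w2"
    by (auto simp: map_eq_append_conv)
  from Cons.IH split(3) w(3) obtain ws where
    "list_all2 (\<lambda>c wc. \<exists>j\<le>k2. (cfg_step Q ^^ j) [g c] (map Inr wc)) cs ws" "w2 = concat ws"
    by blast
  moreover from this(1) have "list_all2 (\<lambda>c wc. \<exists>j\<le>k. (cfg_step Q ^^ j) [g c] (map Inr wc)) cs ws"
    by (rule list_all2_mono) (use split(4) in \<open>meson le_add2 order_trans\<close>)
  moreover have "\<exists>j\<le>k. (cfg_step Q ^^ j) [g c] (map Inr w1)" using split(2,4) w(2) le_add1 by blast
  ultimately show ?case using w(1) by (intro exI[of _ "w1 # ws"]) auto
qed

lemma cfg_steps_list_all2_concat: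
  "list_all2 (\<lambda>c wc. \<exists>z ws. (cfg_step P)\<^sup>*\<^sup>* [c] (map Inr z) \<and> list_all2 R z ws \<and> wc = concat ws)
      cs wcs \<Longrightarrow>
    \<exists>z ws. (cfg_step P)\<^sup>*\<^sup>* cs (map Inr z) \<and> list_all2 R z ws \<and> concat wcs = concat ws"
proof (induction rule: list_all2_induct)
  case (Cons c cs wc wcs)
  from Cons.hyps(1) Cons.IH obtain z1 ws1 z2 ws2 where
    "(cfg_step P)\<^sup>*\<^sup>* [c] (map Inr z1)" "list_all2 R z1 ws1" "wc = concat ws1"
    "(cfg_step P)\<^sup>*\<^sup>* cs (map Inr z2)" "list_all2 R z2 ws2" "concat wcs = concat ws2"
    by blast
  then show ?case using cfg_steps_append[of P "[c]" "map Inr z1" cs "map Inr z2"]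
    by (intro exI[of _ "z1 @ z2"] exI[of _ "ws1 @ ws2"]) (auto intro: list_all2_appendI)
qed (intro exI[of _ "[]"], auto)

text \<open>Q contains a copy of P with nonterminals renamed by e and each terminal c replaced by the
  symbol t c, so a Q-derivation from a renamed sentential form factors through a P-derivation.\<close>

lemma relpowp_embedded_grammar:
  fixes P :: "('n \<times> ('n + 'c) list) set" and Q :: "('m \<times> ('m + 'd) list) set"
  assumes rules: "\<And>X \<alpha>. (e X, \<alpha>) \<in> Q \<Longrightarrow> \<exists>\<alpha>1. (X, \<alpha>1) \<in> P \<and> \<alpha> = map (case_sum (Inl \<circ> e) t) \<alpha>1"
    and "(cfg_step Q ^^ k) (map (case_sum (Inl \<circ> e) t) \<gamma>) (map Inr w)"
  shows "\<exists>z ws. (cfg_step P)\<^sup>*\<^sup>* \<gamma> (map Inr z) \<and>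
    list_all2 (\<lambda>c wc. \<exists>j\<le>k. (cfg_step Q ^^ j) [t c] (map Inr wc)) z ws \<and> w = concat ws"
  using assms(2)
proof (induction k arbitrary: \<gamma> w rule: less_induct)
  case (less k)
  let ?emb = "case_sum (Inl \<circ> e) t"
  let ?R = "\<lambda>c wc. \<exists>j\<le>k. (cfg_step Q ^^ j) [t c] (map Inr wc)"
  let ?D = "\<lambda>c wc. \<exists>z ws. (cfg_step P)\<^sup>*\<^sup>* [c] (map Inr z) \<and> list_all2 ?R z ws \<and> wc = concat ws"
  from relpowp_cfg_step_map_split[OF less.prems] obtain ws where
    ws: "list_all2 (\<lambda>c wc. \<exists>j\<le>k. (cfg_step Q ^^ j) [?emb c] (map Inr wc)) \<gamma> ws" "w = concat ws"
    by blast
  have symbol: "?D c wc" if "j \<le> k" "(cfg_step Q ^^ j) [?emb c] (map Inr wc)" for c wc j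
  proof (cases c)
    case (Inl X)
    with that(2) have "(cfg_step Q ^^ j) [Inl (e X)] (map Inr wc)" by simp
    then obtain j' \<alpha> where j': "j = Suc j'" "(e X, \<alpha>) \<in> Q" "(cfg_step Q ^^ j') \<alpha> (map Inr wc)"
      by (rule relpowp_cfg_step_nonterminal)
    from rules[OF j'(2)] obtain \<alpha>1 where \<alpha>1: "(X, \<alpha>1) \<in> P" "\<alpha> = map ?emb \<alpha>1" by blast
    have "j' < k" using j'(1) that(1) by simp
    from less.IH[OF this] j'(3) \<alpha>1(2) obtain z ws where
      z: "(cfg_step P)\<^sup>*\<^sup>* \<alpha>1 (map Inr z)"
      "list_all2 (\<lambda>c wc. \<exists>i\<le>j'. (cfg_step Q ^^ i) [t c] (map Inr wc)) z ws" "wc = concat ws"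
      by blast
    from z(2) have "list_all2 ?R z ws"
      by (rule list_all2_mono) (use \<open>j' < k\<close> in \<open>meson less_imp_le order_trans\<close>)
    moreover have "(cfg_step P)\<^sup>*\<^sup>* [c] (map Inr z)"
      using Inl cfg_step_rule[OF \<alpha>1(1)] z(1) by (simp add: converse_rtranclp_into_rtranclp)
    ultimately show ?thesis using z(3) by blast
  next
    case (Inr d)
    with that have "?R d wc" by auto
    with Inr show ?thesis by (intro exI[of _ "[d]"] exI[of _ "[wc]"]) auto
  qed
  from ws(1) have "list_all2 ?D \<gamma> ws" by (rule list_all2_mono) (use symbol in blast)
  then show ?case unfolding ws(2) by (rule cfg_steps_list_all2_concat)
qed

lemma relpowp_embedded_grammar_lang:
  fixes P :: "('n \<times> ('n + 'c) list) set" and Q :: "('m \<times> ('m + 'd) list) set"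
  assumes rules: "\<And>X \<alpha>. (e X, \<alpha>) \<in> Q \<Longrightarrow> \<exists>\<alpha>1. (X, \<alpha>1) \<in> P \<and> \<alpha> = map (case_sum (Inl \<circ> e) t) \<alpha>1"
    and "(cfg_step Q ^^ k) [Inl (e s)] (map Inr w)"
  shows "\<exists>z ws. z \<in> cfg_lang P s \<and>
    list_all2 (\<lambda>c wc. \<exists>j<k. (cfg_step Q ^^ j) [t c] (map Inr wc)) z ws \<and> w = concat ws"
proof -
  from assms(2) obtain k' \<alpha> where k': "k = Suc k'" "(e s, \<alpha>) \<in> Q" "(cfg_step Q ^^ k') \<alpha> (map Inr w)"
    by (rule relpowp_cfg_step_nonterminal)
  from rules[OF k'(2)] obtain \<alpha>1 where \<alpha>1: "(s, \<alpha>1) \<in> P" "\<alpha> = map (case_sum (Inl \<circ> e) t) \<alpha>1"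
    by blast
  from relpowp_embedded_grammar[OF rules, where k = k' and \<gamma> = \<alpha>1 and w = w] k'(3) \<alpha>1(2)
  obtain z ws where
    z: "(cfg_step P)\<^sup>*\<^sup>* \<alpha>1 (map Inr z)"
    "list_all2 (\<lambda>c wc. \<exists>j\<le>k'. (cfg_step Q ^^ j) [t c] (map Inr wc)) z ws" "w = concat ws"
    by blast
  have "z \<in> cfg_lang P s"
    using cfg_step_rule[OF \<alpha>1(1)] z(1) by (simp add: cfg_lang_def converse_rtranclp_into_rtranclp)
  moreover from z(2) have "list_all2 (\<lambda>c wc. \<exists>j<k. (cfg_step Q ^^ j) [t c] (map Inr wc)) z ws"
    by (rule list_all2_mono) (use k'(1) in \<open>auto simp: less_Suc_eq_le\<close>)
  ultimately show ?thesis using z(3) by blast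
qed

section \<open>Nested substitution of markers\<close>

abbreviation marked :: "'a list \<Rightarrow> 'a list \<Rightarrow> 'a option list" where
  "marked u v \<equiv> map Some u @ [None] @ rev (map Some v)"

text \<open>The words of L1, renamed by f1, in which each marker None is kept or replaced by a word of
  nested_R, and symmetrically; for the word problems of S and T these are the instances of the word
  problem of the free product whose two sides begin in S, respectively in T.\<close>

inductive nested_L and nested_R
  for L1 :: "'a option list set" and f1 :: "'a \<Rightarrow> 'c"
  and L2 :: "'b option list set" and f2 :: "'b \<Rightarrow> 'c" where
  "z \<in> L1 \<Longrightarrow> list_all2 (\<lambda>c w. w = [map_option f1 c] \<or> c = None \<and> nested_R L1 f1 L2 f2 w) z ws
    \<Longrightarrow> nested_L L1 f1 L2 f2 (concat ws)"
| "z \<in> L2 \<Longrightarrow> list_all2 (\<lambda>c w. w = [map_option f2 c] \<or> c = None \<and> nested_L L1 f1 L2 f2 w) z ws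
    \<Longrightarrow> nested_R L1 f1 L2 f2 (concat ws)"

datatype nested_nt = In_L nat | In_R nat | Hole_L | Hole_R | Start

instance nested_nt :: countable
  by countable_datatype

definition term_L :: "('a \<Rightarrow> 'c) \<Rightarrow> 'a option \<Rightarrow> nested_nt + 'c option" where
  "term_L f = case_option (Inl Hole_L) (\<lambda>a. Inr (Some (f a)))"

definition term_R :: "('b \<Rightarrow> 'c) \<Rightarrow> 'b option \<Rightarrow> nested_nt + 'c option" where
  "term_R f = case_option (Inl Hole_R) (\<lambda>b. Inr (Some (f b)))"

text \<open>Grammars P and P' for L and L', with the marker of each turned into the nonterminal Hole_L
  resp. Hole_R, which derives the marker or a word of the other grammar.\<close>

definition nested_grammar ::
  "(nat \<times> (nat + 'a option) list) set \<Rightarrow> nat \<Rightarrow> ('a \<Rightarrow> 'c) \<Rightarrow>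
   (nat \<times> (nat + 'b option) list) set \<Rightarrow> nat \<Rightarrow> ('b \<Rightarrow> 'c) \<Rightarrow>
   (nested_nt \<times> (nested_nt + 'c option) list) set" where
  "nested_grammar P s f P' s' g =
     (\<lambda>(X, \<alpha>). (In_L X, map (case_sum (Inl \<circ> In_L) (term_L f)) \<alpha>)) ` P \<union>
     (\<lambda>(X, \<alpha>). (In_R X, map (case_sum (Inl \<circ> In_R) (term_R g)) \<alpha>)) ` P' \<union>
     {(Hole_L, [Inr None]), (Hole_L, [Inl (In_R s')]), (Hole_R, [Inr None]), (Hole_R, [Inl (In_L s)]),
      (Start, [Inl (In_L s)]), (Start, [Inl (In_R s')])}"

lemma nested_grammar_derives_nested:
  fixes P :: "(nat \<times> (nat + 'a option) list) set" and P' :: "(nat \<times> (nat + 'b option) list) set"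
    and s s' :: nat and f :: "'a \<Rightarrow> 'c" and g :: "'b \<Rightarrow> 'c"
  defines "G \<equiv> nested_grammar P s f P' s' g"
  shows "nested_L (cfg_lang P s) f (cfg_lang P' s') g w \<Longrightarrow> (cfg_step G)\<^sup>*\<^sup>* [Inl (In_L s)] (map Inr w)"
    and "nested_R (cfg_lang P s) f (cfg_lang P' s') g w \<Longrightarrow> (cfg_step G)\<^sup>*\<^sup>* [Inl (In_R s')] (map Inr w)"
proof (induction rule: nested_L_nested_R.inducts)
  case (1 z ws)
  have "(cfg_step P)\<^sup>*\<^sup>* [Inl s] (map Inr z)" using 1(1) by (simp add: cfg_lang_def)
  then have "(cfg_step G)\<^sup>*\<^sup>* [Inl (In_L s)] (map (case_sum (Inl \<circ> In_L) (term_L f)) (map Inr z))"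
    using cfg_steps_map[of "case_sum (Inl \<circ> In_L) (term_L f)" In_L P G]
    by (force simp: G_def nested_grammar_def)
  also have "(cfg_step G)\<^sup>*\<^sup>* \<dots> (map Inr (concat ws))"
    unfolding map_map
  proof (rule cfg_steps_concat, use 1(2) in \<open>rule list_all2_mono\<close>)
    fix c w
    assume "w = [map_option f c] \<or> c = None \<and> nested_R (cfg_lang P s) f (cfg_lang P' s') g w \<and>
      (cfg_step G)\<^sup>*\<^sup>* [Inl (In_R s')] (map Inr w)"
    moreover have "cfg_step G [Inl Hole_L] [Inr None]" "cfg_step G [Inl Hole_L] [Inl (In_R s')]"
      by (auto intro: cfg_step_rule simp: G_def nested_grammar_def)
    ultimately show "(cfg_step G)\<^sup>*\<^sup>* [(case_sum (Inl \<circ> In_L) (term_L f) \<circ> Inr) c] (map Inr w)"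
      by (cases c) (auto simp: term_L_def intro: converse_rtranclp_into_rtranclp)
  qed
  finally show ?case .
next
  case (2 z ws)
  have "(cfg_step P')\<^sup>*\<^sup>* [Inl s'] (map Inr z)" using 2(1) by (simp add: cfg_lang_def)
  then have "(cfg_step G)\<^sup>*\<^sup>* [Inl (In_R s')] (map (case_sum (Inl \<circ> In_R) (term_R g)) (map Inr z))"
    using cfg_steps_map[of "case_sum (Inl \<circ> In_R) (term_R g)" In_R P' G]
    by (force simp: G_def nested_grammar_def)
  also have "(cfg_step G)\<^sup>*\<^sup>* \<dots> (map Inr (concat ws))"
    unfolding map_map
  proof (rule cfg_steps_concat, use 2(2) in \<open>rule list_all2_mono\<close>)
    fix c w
    assume "w = [map_option g c] \<or> c = None \<and> nested_L (cfg_lang P s) f (cfg_lang P' s') g w \<and>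
      (cfg_step G)\<^sup>*\<^sup>* [Inl (In_L s)] (map Inr w)"
    moreover have "cfg_step G [Inl Hole_R] [Inr None]" "cfg_step G [Inl Hole_R] [Inl (In_L s)]"
      by (auto intro: cfg_step_rule simp: G_def nested_grammar_def)
    ultimately show "(cfg_step G)\<^sup>*\<^sup>* [(case_sum (Inl \<circ> In_R) (term_R g) \<circ> Inr) c] (map Inr w)"
      by (cases c) (auto simp: term_R_def intro: converse_rtranclp_into_rtranclp)
  qed
  finally show ?case .
qed

lemma nested_L_if_derived:
  fixes P :: "(nat \<times> (nat + 'a option) list) set" and P' :: "(nat \<times> (nat + 'b option) list) set"
    and s s' :: nat and f :: "'a \<Rightarrow> 'c" and g :: "'b \<Rightarrow> 'c"
  defines "G \<equiv> nested_grammar P s f P' s' g"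
  assumes "(cfg_step G ^^ k) [Inl (In_L s)] (map Inr w)"
    and holes: "\<And>j wc. j < k \<Longrightarrow> (cfg_step G ^^ j) [Inl Hole_L] (map Inr wc) \<Longrightarrow>
      wc = [None] \<or> nested_R (cfg_lang P s) f (cfg_lang P' s') g wc"
  shows "nested_L (cfg_lang P s) f (cfg_lang P' s') g w"
proof -
  have "\<exists>\<alpha>1. (X, \<alpha>1) \<in> P \<and> \<alpha> = map (case_sum (Inl \<circ> In_L) (term_L f)) \<alpha>1"
    if "(In_L X, \<alpha>) \<in> G" for X \<alpha>
    using that unfolding G_def nested_grammar_def by auto
  from relpowp_embedded_grammar_lang[OF this assms(2)] obtain z ws where z: "z \<in> cfg_lang P s"
    "list_all2 (\<lambda>c wc. \<exists>j<k. (cfg_step G ^^ j) [term_L f c] (map Inr wc)) z ws" "w = concat ws"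
    by auto
  from z(2) have "list_all2 (\<lambda>c wc. wc = [map_option f c] \<or>
      c = None \<and> nested_R (cfg_lang P s) f (cfg_lang P' s') g wc) z ws"
  proof (rule list_all2_mono)
    fix c wc assume "\<exists>j<k. (cfg_step G ^^ j) [term_L f c] (map Inr wc)"
    with holes show "wc = [map_option f c] \<or> c = None \<and> nested_R (cfg_lang P s) f (cfg_lang P' s') g wc"
      by (cases c) (auto simp: term_L_def dest: relpowp_cfg_step_terminal_singleton)
  qed
  with z(1,3) show ?thesis by (blast intro: nested_L_nested_R.intros)
qed

lemma nested_R_if_derived:
  fixes P :: "(nat \<times> (nat + 'a option) list) set" and P' :: "(nat \<times> (nat + 'b option) list) set"
    and s s' :: nat and f :: "'a \<Rightarrow> 'c" and g :: "'b \<Rightarrow> 'c"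
  defines "G \<equiv> nested_grammar P s f P' s' g"
  assumes "(cfg_step G ^^ k) [Inl (In_R s')] (map Inr w)"
    and holes: "\<And>j wc. j < k \<Longrightarrow> (cfg_step G ^^ j) [Inl Hole_R] (map Inr wc) \<Longrightarrow>
      wc = [None] \<or> nested_L (cfg_lang P s) f (cfg_lang P' s') g wc"
  shows "nested_R (cfg_lang P s) f (cfg_lang P' s') g w"
proof -
  have "\<exists>\<alpha>1. (X, \<alpha>1) \<in> P' \<and> \<alpha> = map (case_sum (Inl \<circ> In_R) (term_R g)) \<alpha>1"
    if "(In_R X, \<alpha>) \<in> G" for X \<alpha>
    using that unfolding G_def nested_grammar_def by auto
  from relpowp_embedded_grammar_lang[OF this assms(2)] obtain z ws where z: "z \<in> cfg_lang P' s'"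
    "list_all2 (\<lambda>c wc. \<exists>j<k. (cfg_step G ^^ j) [term_R g c] (map Inr wc)) z ws" "w = concat ws"
    by auto
  from z(2) have "list_all2 (\<lambda>c wc. wc = [map_option g c] \<or>
      c = None \<and> nested_L (cfg_lang P s) f (cfg_lang P' s') g wc) z ws"
  proof (rule list_all2_mono)
    fix c wc assume "\<exists>j<k. (cfg_step G ^^ j) [term_R g c] (map Inr wc)"
    with holes show "wc = [map_option g c] \<or> c = None \<and> nested_L (cfg_lang P s) f (cfg_lang P' s') g wc"
      by (cases c) (auto simp: term_R_def dest: relpowp_cfg_step_terminal_singleton)
  qed
  with z(1,3) show ?thesis by (blast intro: nested_L_nested_R.intros)
qed

lemma nested_if_nested_grammar_derives:
  fixes P :: "(nat \<times> (nat + 'a option) list) set" and P' :: "(nat \<times> (nat + 'b option) list) set"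
    and s s' :: nat and f :: "'a \<Rightarrow> 'c" and g :: "'b \<Rightarrow> 'c"
  defines "G \<equiv> nested_grammar P s f P' s' g"
    and "NL \<equiv> nested_L (cfg_lang P s) f (cfg_lang P' s') g"
    and "NR \<equiv> nested_R (cfg_lang P s) f (cfg_lang P' s') g"
  shows "((cfg_step G ^^ k) [Inl (In_L s)] (map Inr w) \<longrightarrow> NL w) \<and>
    ((cfg_step G ^^ k) [Inl (In_R s')] (map Inr w) \<longrightarrow> NR w) \<and>
    ((cfg_step G ^^ k) [Inl Hole_L] (map Inr w) \<longrightarrow> w = [None] \<or> NR w) \<and>
    ((cfg_step G ^^ k) [Inl Hole_R] (map Inr w) \<longrightarrow> w = [None] \<or> NL w)"
proof (induction k arbitrary: w rule: less_induct)
  case (less k)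
  have "NL w" if "(cfg_step G ^^ k) [Inl (In_L s)] (map Inr w)"
    using that less.IH unfolding G_def NL_def NR_def by (blast intro: nested_L_if_derived)
  moreover have "NR w" if "(cfg_step G ^^ k) [Inl (In_R s')] (map Inr w)"
    using that less.IH unfolding G_def NL_def NR_def by (blast intro: nested_R_if_derived)
  moreover have "w = [None] \<or> NR w" if "(cfg_step G ^^ k) [Inl Hole_L] (map Inr w)"
    using that
  proof (rule relpowp_cfg_step_nonterminal)
    fix k' \<alpha> assume "k = Suc k'" "(Hole_L, \<alpha>) \<in> G" "(cfg_step G ^^ k') \<alpha> (map Inr w)"
    with less.IH[of k'] show ?thesis
      by (auto simp: G_def nested_grammar_def dest: relpowp_cfg_step_terminal_singleton)
  qed
  moreover have "w = [None] \<or> NL w" if "(cfg_step G ^^ k) [Inl Hole_R] (map Inr w)"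
    using that
  proof (rule relpowp_cfg_step_nonterminal)
    fix k' \<alpha> assume "k = Suc k'" "(Hole_R, \<alpha>) \<in> G" "(cfg_step G ^^ k') \<alpha> (map Inr w)"
    with less.IH[of k'] show ?thesis
      by (auto simp: G_def nested_grammar_def dest: relpowp_cfg_step_terminal_singleton)
  qed
  ultimately show ?case by blast
qed

lemma cfg_lang_nested_grammar:
  "cfg_lang (nested_grammar P s f P' s' g) Start =
    {w. nested_L (cfg_lang P s) f (cfg_lang P' s') g w} \<union>
    {w. nested_R (cfg_lang P s) f (cfg_lang P' s') g w}"
  (is "cfg_lang ?G Start = ?N")
proof (intro set_eqI iffI)
  fix w assume "w \<in> cfg_lang ?G Start"
  then obtain k where "(cfg_step ?G ^^ k) [Inl Start] (map Inr w)"
    by (auto simp: cfg_lang_def dest: rtranclp_imp_relpowp)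
  then obtain k' \<alpha> where \<alpha>: "(Start, \<alpha>) \<in> ?G" "(cfg_step ?G ^^ k') \<alpha> (map Inr w)"
    by (rule relpowp_cfg_step_nonterminal)
  from \<alpha>(1) have "\<alpha> = [Inl (In_L s)] \<or> \<alpha> = [Inl (In_R s')]"
    by (auto simp: nested_grammar_def)
  with \<alpha>(2) nested_if_nested_grammar_derives[where P = P and P' = P' and k = k' and w = w]
  show "w \<in> ?N"
    by blast
next
  have "cfg_step ?G [Inl Start] [Inl (In_L s)]" "cfg_step ?G [Inl Start] [Inl (In_R s')]"
    by (auto intro: cfg_step_rule simp: nested_grammar_def)
  moreover fix w assume "w \<in> ?N"
  ultimately show "w \<in> cfg_lang ?G Start"
    using nested_grammar_derives_nested[where P = P and P' = P' and w = w]
    by (auto simp: cfg_lang_def intro: converse_rtranclp_into_rtranclp)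
qed

lemma context_free_nested:
  fixes L :: "'a option list set" and L' :: "'b option list set"
  assumes "context_free L" and "context_free L'"
  shows "context_free ({w. nested_L L f L' g w} \<union> {w. nested_R L f L' g w})"
proof -
  obtain P :: "(nat \<times> (nat + 'a option) list) set" and s where P: "finite P" "cfg_lang P s = L"
    using assms(1) unfolding context_free_def by blast
  obtain P' :: "(nat \<times> (nat + 'b option) list) set" and s' where P': "finite P'" "cfg_lang P' s' = L'"
    using assms(2) unfolding context_free_def by blast
  have "finite (nested_grammar P s f P' s' g)"
    using P(1) P'(1) by (simp add: nested_grammar_def)
  then have "context_free (cfg_lang (nested_grammar P s f P' s' g) Start)"
    by (rule context_free_cfg_lang)
  then show ?thesis by (simp add: cfg_lang_nested_grammar P(2) P'(2))
qed

lemma concat_list_all2_marked: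
  "(\<exists>ws. list_all2 (\<lambda>c w. w = [map_option f c] \<or> c = None \<and> W w) (marked u v) ws \<and> x = concat ws) \<longleftrightarrow>
    (\<exists>wm. (wm = [None] \<or> W wm) \<and> x = map (Some \<circ> f) u @ wm @ rev (map (Some \<circ> f) v))"
  (is "(\<exists>ws. list_all2 ?R _ ws \<and> _) \<longleftrightarrow> _")
proof -
  have letters: "list_all2 ?R (map Some u) ws \<longleftrightarrow> ws = map (\<lambda>a. [Some (f a)]) u" for u ws
    by (induction u arbitrary: ws) (auto simp: list_all2_Cons1)
  have split: "list_all2 ?R (marked u v) ws \<longleftrightarrow>
      (\<exists>wm. ?R None wm \<and> ws = map (\<lambda>a. [Some (f a)]) u @ [wm] @ map (\<lambda>a. [Some (f a)]) (rev v))"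
    for ws
    by (auto simp: list_all2_append1 list_all2_Cons1 rev_map letters)
  show ?thesis
    unfolding split by (auto simp: rev_map)
qed

lemma nested_L_marked:
  assumes "marked u v \<in> L" and "wm = [None] \<or> nested_R L f L' g wm"
  shows "nested_L L f L' g (map (Some \<circ> f) u @ wm @ rev (map (Some \<circ> f) v))"
proof -
  from assms(2) obtain ws where
    ws: "list_all2 (\<lambda>c w. w = [map_option f c] \<or> c = None \<and> nested_R L f L' g w) (marked u v) ws"
      "map (Some \<circ> f) u @ wm @ rev (map (Some \<circ> f) v) = concat ws"
    using concat_list_all2_marked[of f "nested_R L f L' g" u v] by blast
  have "nested_L L f L' g (concat ws)"
    by (rule nested_L_nested_R.intros(1)[OF assms(1) ws(1)])
  with ws(2) show ?thesis by simp
qed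

lemma nested_R_marked:
  assumes "marked u v \<in> L'" and "wm = [None] \<or> nested_L L f L' g wm"
  shows "nested_R L f L' g (map (Some \<circ> g) u @ wm @ rev (map (Some \<circ> g) v))"
proof -
  from assms(2) obtain ws where
    ws: "list_all2 (\<lambda>c w. w = [map_option g c] \<or> c = None \<and> nested_L L f L' g w) (marked u v) ws"
      "map (Some \<circ> g) u @ wm @ rev (map (Some \<circ> g) v) = concat ws"
    using concat_list_all2_marked[of g "nested_L L f L' g" u v] by blast
  have "nested_R L f L' g (concat ws)"
    by (rule nested_L_nested_R.intros(2)[OF assms(1) ws(1)])
  with ws(2) show ?thesis by simp
qed

section \<open>Word problems of factor-closed subsemigroups\<close>

text \<open>Injectivity of marked, stated in the simp normal form of its left-hand side.\<close>

lemma marked_eq_iff [simp]: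
  "map Some u @ None # rev (map Some v) = map Some u' @ None # rev (map Some v') \<longleftrightarrow> u = u' \<and> v = v'"
proof
  assume "map Some u @ None # rev (map Some v) = map Some u' @ None # rev (map Some v')"
  then have "u = u' \<and> rev (map Some v) = rev (map Some v')"
  proof (induction u arbitrary: u')
    case Nil
    then show ?case by (cases u') auto
  next
    case (Cons a u)
    then show ?case by (cases u') auto
  qed
  then show "u = u' \<and> v = v'" by (simp add: inj_map_eq_map)
qed simp

lemma marked_in_WP_iff:
  "marked u v \<in> WP S A \<longleftrightarrow> u \<noteq> [] \<and> v \<noteq> [] \<and> set u \<subseteq> A \<and> set v \<subseteq> A \<and> word_eval S u = word_eval S v"
  unfolding WP_def by auto

lemma map_option_eq_marked:
  assumes "map (map_option h) w = marked u' v'"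
  obtains u v where "w = marked u v" "u' = map h u" "v' = map h v"
proof -
  from assms have "map (map_option h) w = map Some u' @ ([None] @ map Some (rev v'))"
    by (simp add: rev_map)
  then obtain w1 r where w1: "w = w1 @ r" "map Some u' = map (map_option h) w1"
    "[None] @ map Some (rev v') = map (map_option h) r"
    unfolding map_eq_append_conv by blast
  from w1(3) obtain w2 w3 where w23: "r = w2 @ w3" "[None] = map (map_option h) w2"
    "map Some (rev v') = map (map_option h) w3"
    by (metis map_eq_append_conv)
  have w: "w = w1 @ w2 @ w3" "map (map_option h) w1 = map Some u'"
    "map (map_option h) w2 = [None]" "map (map_option h) w3 = map Some (rev v')"
    using w1 w23 by auto
  have map_Some: "\<exists>u. x = map Some u \<and> map h u = y" if "map (map_option h) x = map Some y" for x y
    using that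
  proof (induction x arbitrary: y)
    case (Cons a x)
    then show ?case by (cases a; cases y) (auto intro: exI[of _ "_ # _"])
  qed simp
  from map_Some[OF w(2)] map_Some[OF w(4)] w(3) obtain u v3 where
    "w1 = map Some u" "map h u = u'" "w3 = map Some v3" "map h v3 = rev v'" "w2 = [None]"
    by (auto simp: map_eq_Cons_conv)
  then show ?thesis
    using w(1) by (intro that[of u "rev v3"]) (auto simp: rev_map[symmetric])
qed

lemma word_eval_snoc: "w \<noteq> [] \<Longrightarrow> word_eval S (w @ [x]) = mul S (word_eval S w) x"
  by (cases w) (auto simp: word_eval_def)

lemma word_eval_map_hom:
  assumes "\<And>x y. mul F (h x) (h y) = h (mul S x y)" and "u \<noteq> []"
  shows "word_eval F (map h u) = h (word_eval S u)"
proof -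
  have "foldl (mul F) (h a) (map h l) = h (foldl (mul S) a l)" for a l
    using assms(1) by (induction l arbitrary: a) simp_all
  with assms(2) show ?thesis by (cases u) (simp_all add: word_eval_def)
qed

text \<open>Under these hypotheses the word problem of S is the preimage of that of F under the letter
  map h.\<close>

lemma U_CF_if_factor_closed_embedding:
  fixes S :: "'a sgrp" and F :: "'c sgrp" and h :: "'a \<Rightarrow> 'c"
  assumes "U_CF F" and "inj h"
    and hom: "\<And>x y. mul F (h x) (h y) = h (mul S x y)"
    and carr: "\<And>x. h x \<in> carr F \<longleftrightarrow> x \<in> carr S"
    and factor_closed: "\<And>w s. w \<noteq> [] \<Longrightarrow> set w \<subseteq> carr F \<Longrightarrow> s \<in> carr S \<Longrightarrow>
      word_eval F w = h s \<Longrightarrow> set w \<subseteq> range h"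
  shows "U_CF S"
proof -
  from assms(1) obtain A where A: "finite A" "generates F A" "context_free (WP F A)"
    unfolding U_CF_def by blast
  have "A \<subseteq> carr F" using A(2) by (simp add: generates_def)
  have "finite (h -` A)" using A(1) \<open>inj h\<close> by (simp add: finite_vimageI)
  moreover have "generates S (h -` A)"
    unfolding generates_def
  proof (intro conjI ballI)
    show "h -` A \<subseteq> carr S" using \<open>A \<subseteq> carr F\<close> carr by auto
  next
    fix s assume "s \<in> carr S"
    with A(2) carr obtain w where w: "w \<noteq> []" "set w \<subseteq> A" "word_eval F w = h s"
      unfolding generates_def by blast
    with factor_closed \<open>s \<in> carr S\<close> \<open>A \<subseteq> carr F\<close> have "set w \<subseteq> range h" by blast
    then obtain u where "w = map h u" using ex_map_conv[of w h] by auto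
    with w \<open>inj h\<close> have "u \<noteq> []" "set u \<subseteq> h -` A" "word_eval S u = s"
      by (auto simp: word_eval_map_hom[OF hom] inj_eq)
    then show "\<exists>u. u \<noteq> [] \<and> set u \<subseteq> h -` A \<and> word_eval S u = s" by blast
  qed
  moreover have "WP S (h -` A) = {w. map (map_option h) w \<in> WP F A}"
  proof (intro set_eqI iffI; simp)
    fix w assume "w \<in> WP S (h -` A)"
    then obtain u v where "w = marked u v" "u \<noteq> []" "v \<noteq> []" "set u \<subseteq> h -` A" "set v \<subseteq> h -` A"
      "word_eval S u = word_eval S v" unfolding WP_def by blast
    then show "map (map_option h) w \<in> WP F A"
      unfolding WP_def
      by (intro CollectI exI[of _ "map h u"] exI[of _ "map h v"])
        (auto simp: rev_map word_eval_map_hom[OF hom])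
  next
    fix w assume "map (map_option h) w \<in> WP F A"
    then obtain u' v' where uv': "map (map_option h) w = marked u' v'" "u' \<noteq> []" "v' \<noteq> []"
      "set u' \<subseteq> A" "set v' \<subseteq> A" "word_eval F u' = word_eval F v'"
      unfolding WP_def by blast
    from uv'(1) obtain u v where "w = marked u v" "u' = map h u" "v' = map h v"
      by (rule map_option_eq_marked)
    with uv' \<open>inj h\<close> show "w \<in> WP S (h -` A)"
      unfolding WP_def
      by (intro CollectI exI[of _ u] exI[of _ v]) (auto simp: word_eval_map_hom[OF hom] inj_eq)
  qed
  moreover have "inj (map_option h)" using \<open>inj h\<close> by (simp add: option.inj_map)
  ultimately show ?thesis
    using context_free_vimage[OF _ A(3)] unfolding U_CF_def by metis
qed

section \<open>Words in the free product\<close>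

lemma fp_mul_singletons [simp]:
  "fp_mul S T [Inl a] [Inl b] = [Inl (mul S a b)]"
  "fp_mul S T [Inr a'] [Inr b'] = [Inr (mul T a' b')]"
  "fp_mul S T [Inl a] [Inr b'] = [Inl a, Inr b']"
  "fp_mul S T [Inr a'] [Inl b] = [Inr a', Inl b]"
  by (simp_all add: fp_mul_def)

lemma fp_mul_eq_singleton:
  assumes "fp_mul S T x y = [c]" and "x \<noteq> []" and "y \<noteq> []"
  shows "\<exists>d d'. x = [d] \<and> y = [d'] \<and> isl d = isl c \<and> isl d' = isl c"
  using assms
  by (cases x rule: rev_cases; cases y) (auto simp: fp_mul_def append_eq_Cons_conv split: sum.splits)

lemma fp_carr_singleton [simp]:
  "[Inl a] \<in> fp_carr S T \<longleftrightarrow> a \<in> carr S"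
  "[Inr b] \<in> fp_carr S T \<longleftrightarrow> b \<in> carr T"
  by (simp_all add: fp_carr_def)

lemma fp_carr_nonempty: "x \<in> fp_carr S T \<Longrightarrow> x \<noteq> []"
  by (simp add: fp_carr_def)

lemma fp_mul_nonempty: "x \<noteq> [] \<Longrightarrow> fp_mul S T x y \<noteq> []"
  by (auto simp: fp_mul_def split: sum.split)

lemma word_eval_free_prod_nonempty:
  "w \<noteq> [] \<Longrightarrow> \<forall>x\<in>set w. x \<noteq> [] \<Longrightarrow> word_eval (free_prod S T) w \<noteq> []"
proof -
  have "foldl (fp_mul S T) x ys \<noteq> []" if "x \<noteq> []" for x ys
    using that by (induction ys arbitrary: x) (simp_all add: fp_mul_nonempty)
  then show "w \<noteq> [] \<Longrightarrow> \<forall>x\<in>set w. x \<noteq> [] \<Longrightarrow> word_eval (free_prod S T) w \<noteq> []"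
    by (cases w) (simp_all add: word_eval_def free_prod_def)
qed

lemma word_eval_free_prod_eq_singleton:
  "w \<noteq> [] \<Longrightarrow> \<forall>x\<in>set w. x \<noteq> [] \<Longrightarrow> word_eval (free_prod S T) w = [c] \<Longrightarrow>
    \<forall>x\<in>set w. \<exists>d. x = [d] \<and> isl d = isl c"
proof (induction w arbitrary: c rule: rev_induct)
  case (snoc x w)
  show ?case
  proof (cases "w = []")
    case False
    with snoc.prems have "fp_mul S T (word_eval (free_prod S T) w) x = [c]"
      by (simp add: word_eval_snoc free_prod_def)
    moreover have "word_eval (free_prod S T) w \<noteq> []" "x \<noteq> []"
      using False snoc.prems(2) by (simp_all add: word_eval_free_prod_nonempty)
    ultimately obtain d d' where
      d: "word_eval (free_prod S T) w = [d]" "x = [d']" "isl d = isl c" "isl d' = isl c"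
      using fp_mul_eq_singleton by blast
    have "\<forall>x\<in>set w. x \<noteq> []" using snoc.prems(2) by simp
    from snoc.IH[OF False this d(1)] d(2-4) show ?thesis by simp
  qed (use snoc.prems in \<open>auto simp: word_eval_def\<close>)
qed simp

abbreviation singletons :: "'a list \<Rightarrow> 'a list list" where
  "singletons xs \<equiv> map (\<lambda>c. [c]) xs"

text \<open>The normal form of the product of a word of letters; the empty word is sent to [] instead of
  the junk value of word_eval.\<close>

definition fp_eval :: "'a sgrp \<Rightarrow> 'b sgrp \<Rightarrow> ('a + 'b) list \<Rightarrow> ('a + 'b) list" where
  "fp_eval S T x = (if x = [] then [] else word_eval (free_prod S T) (singletons x))"

lemma fp_mul_append_left:
  "x \<noteq> [] \<Longrightarrow> y \<noteq> [] \<Longrightarrow> fp_mul S T (p @ x) y = p @ fp_mul S T x y"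
  by (auto simp: fp_mul_def butlast_append split: sum.split)

lemma foldl_fp_mul_append_left:
  "x \<noteq> [] \<Longrightarrow> \<forall>y\<in>set ys. y \<noteq> [] \<Longrightarrow> foldl (fp_mul S T) (p @ x) ys = p @ foldl (fp_mul S T) x ys"
  by (induction ys arbitrary: x) (simp_all add: fp_mul_append_left fp_mul_nonempty)

lemma fp_eval_eq_Nil_iff [simp]: "fp_eval S T x = [] \<longleftrightarrow> x = []"
  using word_eval_free_prod_nonempty[of "singletons x" S T] by (simp add: fp_eval_def)

lemma fp_eval_Nil [simp]: "fp_eval S T [] = []"
  by (simp add: fp_eval_def)

lemma fp_eval_Cons: "fp_eval S T (c # x) = foldl (fp_mul S T) [c] (singletons x)"
  by (simp add: fp_eval_def word_eval_def free_prod_def)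

lemma fp_eval_Inl_syllable:
  assumes "u \<noteq> []" and "x = [] \<or> \<not> isl (hd x)"
  shows "fp_eval S T (map Inl u @ x) = Inl (word_eval S u) # fp_eval S T x"
proof -
  obtain a u' where u: "u = a # u'" using assms(1) by (cases u) auto
  have "foldl (fp_mul S T) [Inl a] (map (\<lambda>c. [Inl c]) u') = [Inl (word_eval S u)]"
    unfolding u word_eval_def by (induction u' arbitrary: a) simp_all
  then have "fp_eval S T (map Inl u @ x) = foldl (fp_mul S T) [Inl (word_eval S u)] (singletons x)"
    by (simp add: u fp_eval_Cons comp_def)
  also have "\<dots> = Inl (word_eval S u) # fp_eval S T x"
  proof (cases x)
    case (Cons b x')
    with assms(2) obtain b' where "b = Inr b'" by (cases b) auto
    then show ?thesis
      using foldl_fp_mul_append_left[of "[Inr b']" "singletons x'" S T "[Inl (word_eval S u)]"]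
      by (simp add: Cons fp_eval_Cons)
  qed simp
  finally show ?thesis .
qed

lemma fp_eval_Inr_syllable:
  assumes "u \<noteq> []" and "x = [] \<or> isl (hd x)"
  shows "fp_eval S T (map Inr u @ x) = Inr (word_eval T u) # fp_eval S T x"
proof -
  obtain a u' where u: "u = a # u'" using assms(1) by (cases u) auto
  have "foldl (fp_mul S T) [Inr a] (map (\<lambda>c. [Inr c]) u') = [Inr (word_eval T u)]"
    unfolding u word_eval_def by (induction u' arbitrary: a) simp_all
  then have "fp_eval S T (map Inr u @ x) = foldl (fp_mul S T) [Inr (word_eval T u)] (singletons x)"
    by (simp add: u fp_eval_Cons comp_def)
  also have "\<dots> = Inr (word_eval T u) # fp_eval S T x"
  proof (cases x)
    case (Cons b x')
    with assms(2) obtain b' where "b = Inl b'" by (cases b) auto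
    then show ?thesis
      using foldl_fp_mul_append_left[of "[Inl b']" "singletons x'" S T "[Inr (word_eval T u)]"]
      by (simp add: Cons fp_eval_Cons)
  qed simp
  finally show ?thesis .
qed

lemma Inl_syllable_decomp:
  assumes "x \<noteq> []" and "isl (hd x)"
  obtains u x' where "u \<noteq> []" "x = map Inl u @ x'" "x' = [] \<or> \<not> isl (hd x')"
proof (rule that)
  show "map projl (takeWhile isl x) \<noteq> []" using assms by (cases x) auto
  show "x = map Inl (map projl (takeWhile isl x)) @ dropWhile isl x"
    by (induction x) auto
  show "dropWhile isl x = [] \<or> \<not> isl (hd (dropWhile isl x))"
    using hd_dropWhile by blast
qed

lemma Inr_syllable_decomp:
  assumes "x \<noteq> []" and "\<not> isl (hd x)"
  obtains u x' where "u \<noteq> []" "x = map Inr u @ x'" "x' = [] \<or> isl (hd x')"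
proof (rule that)
  show "map projr (takeWhile (Not \<circ> isl) x) \<noteq> []" using assms by (cases x) auto
  show "x = map Inr (map projr (takeWhile (Not \<circ> isl) x)) @ dropWhile (Not \<circ> isl) x"
    by (induction x) auto
  show "dropWhile (Not \<circ> isl) x = [] \<or> isl (hd (dropWhile (Not \<circ> isl) x))"
    using hd_dropWhile[of "Not \<circ> isl" x] by auto
qed

lemma isl_hd_fp_eval: "x \<noteq> [] \<Longrightarrow> isl (hd (fp_eval S T x)) = isl (hd x)"
proof (cases "isl (hd x)")
  case True
  assume "x \<noteq> []"
  then obtain u x' where "u \<noteq> []" "x = map Inl u @ x'" "x' = [] \<or> \<not> isl (hd x')"
    using True by (rule Inl_syllable_decomp)
  then show ?thesis by (auto simp: fp_eval_Inl_syllable neq_Nil_conv)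
next
  case False
  assume "x \<noteq> []"
  then obtain u x' where "u \<noteq> []" "x = map Inr u @ x'" "x' = [] \<or> isl (hd x')"
    using False by (rule Inr_syllable_decomp)
  then show ?thesis by (auto simp: fp_eval_Inr_syllable neq_Nil_conv)
qed

definition fp_gens :: "'a set \<Rightarrow> 'b set \<Rightarrow> ('a + 'b) list set" where
  "fp_gens A B = (\<lambda>a. [Inl a]) ` A \<union> (\<lambda>b. [Inr b]) ` B"

lemma fp_carr_Cons:
  assumes "c # xs \<in> fp_carr S T"
  shows "case_sum (\<lambda>a. a \<in> carr S) (\<lambda>b. b \<in> carr T) c"
    and "xs \<noteq> [] \<Longrightarrow> xs \<in> fp_carr S T \<and> isl c \<noteq> isl (hd xs)"
proof -
  have alt: "isl ((c # xs) ! i) \<noteq> isl ((c # xs) ! Suc i)" if "Suc i < length (c # xs)" for i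
    using assms that by (simp add: fp_carr_def)
  show "case_sum (\<lambda>a. a \<in> carr S) (\<lambda>b. b \<in> carr T) c"
    using assms by (simp add: fp_carr_def split: sum.split)
  assume "xs \<noteq> []"
  moreover have "isl (xs ! i) \<noteq> isl (xs ! Suc i)" if "Suc i < length xs" for i
    using alt[of "Suc i"] that by simp
  moreover have "isl c \<noteq> isl (hd xs)"
    using alt[of 0] \<open>xs \<noteq> []\<close> by (cases xs) auto
  ultimately show "xs \<in> fp_carr S T \<and> isl c \<noteq> isl (hd xs)"
    using assms by (auto simp: fp_carr_def)
qed

lemma fp_carr_fp_eval:
  assumes "generates S A" and "generates T B" and "xs \<in> fp_carr S T"
  shows "\<exists>x. x \<noteq> [] \<and> set x \<subseteq> Inl ` A \<union> Inr ` B \<and> fp_eval S T x = xs"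
  using assms(3)
proof (induction xs)
  case (Cons c xs)
  have rest: "\<exists>x'. (x' = [] \<or> isl (hd x') \<noteq> isl c) \<and> set x' \<subseteq> Inl ` A \<union> Inr ` B \<and> fp_eval S T x' = xs"
  proof (cases "xs = []")
    case False
    with fp_carr_Cons(2)[OF Cons.prems] have "xs \<in> fp_carr S T" "isl c \<noteq> isl (hd xs)" by auto
    moreover from Cons.IH[OF this(1)] obtain x' where
      "x' \<noteq> []" "set x' \<subseteq> Inl ` A \<union> Inr ` B" "fp_eval S T x' = xs"
      by blast
    moreover from this(1,3) have "isl (hd x') = isl (hd xs)"
      using isl_hd_fp_eval[of x' S T] by simp
    ultimately show ?thesis by metis
  qed simp
  then obtain x' where x': "x' = [] \<or> isl (hd x') \<noteq> isl c" "set x' \<subseteq> Inl ` A \<union> Inr ` B"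
    "fp_eval S T x' = xs" by blast
  show ?case
  proof (cases c)
    case (Inl s)
    with fp_carr_Cons(1)[OF Cons.prems] assms(1) obtain u where "u \<noteq> []" "set u \<subseteq> A" "word_eval S u = s"
      unfolding generates_def by auto
    with x' Inl show ?thesis
      by (intro exI[of _ "map Inl u @ x'"]) (auto simp: fp_eval_Inl_syllable)
  next
    case (Inr s)
    with fp_carr_Cons(1)[OF Cons.prems] assms(2) obtain u where "u \<noteq> []" "set u \<subseteq> B" "word_eval T u = s"
      unfolding generates_def by auto
    with x' Inr show ?thesis
      by (intro exI[of _ "map Inr u @ x'"]) (auto simp: fp_eval_Inr_syllable)
  qed
qed (simp add: fp_carr_def)

lemma generates_free_prod:
  assumes "generates S A" and "generates T B"
  shows "generates (free_prod S T) (fp_gens A B)"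
  unfolding generates_def
proof (intro conjI ballI)
  show "fp_gens A B \<subseteq> carr (free_prod S T)"
    using assms by (auto simp: generates_def free_prod_def fp_gens_def)
next
  fix xs assume "xs \<in> carr (free_prod S T)"
  then have "xs \<in> fp_carr S T" by (simp add: free_prod_def)
  with assms obtain x where "x \<noteq> []" "set x \<subseteq> Inl ` A \<union> Inr ` B" "fp_eval S T x = xs"
    using fp_carr_fp_eval by blast
  then show "\<exists>w. w \<noteq> [] \<and> set w \<subseteq> fp_gens A B \<and> word_eval (free_prod S T) w = xs"
    by (intro exI[of _ "singletons x"]) (auto simp: fp_eval_def fp_gens_def)
qed

section \<open>Word problems of free products and free factors\<close>

lemma U_CF_free_factor_left:
  assumes "U_CF (free_prod S T)"
  shows "U_CF S"
proof (rule U_CF_if_factor_closed_embedding[OF assms, where h = "\<lambda>a. [Inl a]"])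
  fix w s
  assume w: "w \<noteq> []" "set w \<subseteq> carr (free_prod S T)" "word_eval (free_prod S T) w = [Inl s]"
  from w(2) have "\<forall>x\<in>set w. x \<noteq> []"
    by (auto simp: free_prod_def dest: fp_carr_nonempty)
  then have singletons: "\<forall>x\<in>set w. \<exists>d. x = [d] \<and> isl d"
    using word_eval_free_prod_eq_singleton[OF w(1) _ w(3)] by simp
  show "set w \<subseteq> range (\<lambda>a. [Inl a])"
  proof
    fix x assume "x \<in> set w"
    with singletons obtain d where "x = [d]" "isl d" by auto
    then show "x \<in> range (\<lambda>a. [Inl a])" by (intro range_eqI[of _ _ "projl d"]) simp
  qed
qed (simp_all add: inj_def free_prod_def)

lemma U_CF_free_factor_right:
  assumes "U_CF (free_prod S T)"
  shows "U_CF T"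
proof (rule U_CF_if_factor_closed_embedding[OF assms, where h = "\<lambda>b. [Inr b]"])
  fix w s
  assume w: "w \<noteq> []" "set w \<subseteq> carr (free_prod S T)" "word_eval (free_prod S T) w = [Inr s]"
  from w(2) have "\<forall>x\<in>set w. x \<noteq> []"
    by (auto simp: free_prod_def dest: fp_carr_nonempty)
  then have singletons: "\<forall>x\<in>set w. \<exists>d. x = [d] \<and> \<not> isl d"
    using word_eval_free_prod_eq_singleton[OF w(1) _ w(3)] by simp
  show "set w \<subseteq> range (\<lambda>b. [Inr b])"
  proof
    fix x assume "x \<in> set w"
    with singletons obtain d where "x = [d]" "\<not> isl d" by auto
    then show "x \<in> range (\<lambda>b. [Inr b])" by (intro range_eqI[of _ _ "projr d"]) simp
  qed
qed (simp_all add: inj_def free_prod_def)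

definition fp_equation ::
  "'a sgrp \<Rightarrow> 'b sgrp \<Rightarrow> 'a set \<Rightarrow> 'b set \<Rightarrow> bool \<Rightarrow> ('a + 'b) list option list \<Rightarrow> bool"
  where "fp_equation S T A B l w \<longleftrightarrow> (\<exists>x y. w = marked (singletons x) (singletons y) \<and>
    x \<noteq> [] \<and> y \<noteq> [] \<and> isl (hd x) = l \<and> set x \<subseteq> Inl ` A \<union> Inr ` B \<and> set y \<subseteq> Inl ` A \<union> Inr ` B \<and>
    fp_eval S T x = fp_eval S T y)"

lemma WP_free_prod_iff_fp_equation:
  "w \<in> WP (free_prod S T) (fp_gens A B) \<longleftrightarrow> (\<exists>l. fp_equation S T A B l w)"
proof
  assume "w \<in> WP (free_prod S T) (fp_gens A B)"
  then obtain u v where uv: "w = marked u v" "u \<noteq> []" "v \<noteq> []" "set u \<subseteq> fp_gens A B"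
    "set v \<subseteq> fp_gens A B" "word_eval (free_prod S T) u = word_eval (free_prod S T) v"
    unfolding WP_def by blast
  have letters: "\<exists>x. u = singletons x \<and> set x \<subseteq> Inl ` A \<union> Inr ` B"
    if "set u \<subseteq> fp_gens A B" for u :: "('a + 'b) list list"
    using that
  proof (induction u)
    case (Cons c u)
    then obtain x where "u = singletons x" "set x \<subseteq> Inl ` A \<union> Inr ` B" by auto
    moreover from Cons.prems obtain d where "c = [d]" "d \<in> Inl ` A \<union> Inr ` B"
      by (auto simp: fp_gens_def)
    ultimately show ?case by (intro exI[of _ "d # x"]) simp
  qed simp
  obtain x y where "u = singletons x" "v = singletons y"
    "set x \<subseteq> Inl ` A \<union> Inr ` B" "set y \<subseteq> Inl ` A \<union> Inr ` B"
    using letters[OF uv(4)] letters[OF uv(5)] by blast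
  with uv have "fp_equation S T A B (isl (hd x)) w"
    unfolding fp_equation_def fp_eval_def by auto
  then show "\<exists>l. fp_equation S T A B l w" ..
next
  assume "\<exists>l. fp_equation S T A B l w"
  then obtain x y where "w = marked (singletons x) (singletons y)" "x \<noteq> []" "y \<noteq> []"
    "set x \<subseteq> Inl ` A \<union> Inr ` B" "set y \<subseteq> Inl ` A \<union> Inr ` B" "fp_eval S T x = fp_eval S T y"
    unfolding fp_equation_def by blast
  then show "w \<in> WP (free_prod S T) (fp_gens A B)"
    unfolding WP_def fp_eval_def
    by (intro CollectI exI[of _ "singletons x"] exI[of _ "singletons y"]) (auto simp: fp_gens_def)
qed

lemma fp_equation_Inl_syllableD:
  assumes "fp_equation S T A B True w"
  obtains u v wm where "marked u v \<in> WP S A" "wm = [None] \<or> fp_equation S T A B False wm"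
    "w = map (Some \<circ> (\<lambda>a. [Inl a])) u @ wm @ rev (map (Some \<circ> (\<lambda>a. [Inl a])) v)"
proof -
  obtain x y where xy: "w = marked (singletons x) (singletons y)" "x \<noteq> []" "y \<noteq> []"
    "isl (hd x)" "set x \<subseteq> Inl ` A \<union> Inr ` B" "set y \<subseteq> Inl ` A \<union> Inr ` B"
    "fp_eval S T x = fp_eval S T y"
    using assms unfolding fp_equation_def by blast
  obtain u x' where x: "u \<noteq> []" "x = map Inl u @ x'" "x' = [] \<or> \<not> isl (hd x')"
    using xy(2,4) by (rule Inl_syllable_decomp)
  have "isl (hd y)" using xy isl_hd_fp_eval[of x S T] isl_hd_fp_eval[of y S T] by simp
  with xy(3) obtain v y' where y: "v \<noteq> []" "y = map Inl v @ y'" "y' = [] \<or> \<not> isl (hd y')"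
    by (rule Inl_syllable_decomp)
  have eq: "word_eval S u = word_eval S v" "fp_eval S T x' = fp_eval S T y'"
    using xy(7) x y by (simp_all add: fp_eval_Inl_syllable)
  have sets: "set u \<subseteq> A" "set v \<subseteq> A" "set x' \<subseteq> Inl ` A \<union> Inr ` B" "set y' \<subseteq> Inl ` A \<union> Inr ` B"
    using xy(5,6) x(2) y(2) by auto
  have "marked u v \<in> WP S A" unfolding marked_in_WP_iff using x(1) y(1) sets eq(1) by blast
  moreover have "x' = [] \<longleftrightarrow> y' = []" using eq(2) by (metis fp_eval_eq_Nil_iff)
  then have "marked (singletons x') (singletons y') = [None] \<or>
      fp_equation S T A B False (marked (singletons x') (singletons y'))"
    using x(3) sets(3,4) eq(2) unfolding fp_equation_def by auto
  moreover have "w = map (Some \<circ> (\<lambda>a. [Inl a])) u @ marked (singletons x') (singletons y') @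
      rev (map (Some \<circ> (\<lambda>a. [Inl a])) v)"
    using xy(1) x(2) y(2) by (simp add: comp_def)
  ultimately show thesis by (rule that)
qed

lemma fp_equation_Inl_syllableI:
  assumes "marked u v \<in> WP S A" and "wm = [None] \<or> fp_equation S T A B False wm"
  shows "fp_equation S T A B True (map (Some \<circ> (\<lambda>a. [Inl a])) u @ wm @ rev (map (Some \<circ> (\<lambda>a. [Inl a])) v))"
proof -
  from marked_in_WP_iff[THEN iffD1, OF assms(1)] have uv: "u \<noteq> []" "v \<noteq> []" "set u \<subseteq> A"
    "set v \<subseteq> A" "word_eval S u = word_eval S v" by blast+
  from assms(2) obtain x' y' where xy': "wm = marked (singletons x') (singletons y')"
    "x' = [] \<and> y' = [] \<or> x' \<noteq> [] \<and> y' \<noteq> [] \<and> \<not> isl (hd x') \<and> \<not> isl (hd y')"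
    "set x' \<subseteq> Inl ` A \<union> Inr ` B" "set y' \<subseteq> Inl ` A \<union> Inr ` B" "fp_eval S T x' = fp_eval S T y'"
  proof
    assume "wm = [None]"
    then show thesis by (intro that[of "[]" "[]"]) simp_all
  next
    assume "fp_equation S T A B False wm"
    then obtain x' y' where "wm = marked (singletons x') (singletons y')" "x' \<noteq> []" "y' \<noteq> []"
      "\<not> isl (hd x')" "set x' \<subseteq> Inl ` A \<union> Inr ` B" "set y' \<subseteq> Inl ` A \<union> Inr ` B"
      "fp_eval S T x' = fp_eval S T y'"
      unfolding fp_equation_def by blast
    moreover from this have "\<not> isl (hd y')"
      using isl_hd_fp_eval[of x' S T] isl_hd_fp_eval[of y' S T] by simp
    ultimately show thesis by (intro that[of x' y']) auto
  qed
  from uv xy'(2,5) have "fp_eval S T (map Inl u @ x') = fp_eval S T (map Inl v @ y')"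
    using fp_eval_Inl_syllable[of u x' S T] fp_eval_Inl_syllable[of v y' S T] by auto
  moreover have "map (Some \<circ> (\<lambda>a. [Inl a])) u @ wm @ rev (map (Some \<circ> (\<lambda>a. [Inl a])) v) =
      marked (singletons (map Inl u @ x')) (singletons (map Inl v @ y'))"
    using xy'(1) by (simp add: comp_def)
  ultimately show ?thesis
    using uv xy'(3,4) unfolding fp_equation_def
    by (intro exI[of _ "map Inl u @ x'"] exI[of _ "map Inl v @ y'"]) (auto simp: neq_Nil_conv)
qed

lemma fp_equation_Inr_syllableD:
  assumes "fp_equation S T A B False w"
  obtains u v wm where "marked u v \<in> WP T B" "wm = [None] \<or> fp_equation S T A B True wm"
    "w = map (Some \<circ> (\<lambda>a. [Inr a])) u @ wm @ rev (map (Some \<circ> (\<lambda>a. [Inr a])) v)"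
proof -
  obtain x y where xy: "w = marked (singletons x) (singletons y)" "x \<noteq> []" "y \<noteq> []"
    "\<not> isl (hd x)" "set x \<subseteq> Inl ` A \<union> Inr ` B" "set y \<subseteq> Inl ` A \<union> Inr ` B"
    "fp_eval S T x = fp_eval S T y"
    using assms unfolding fp_equation_def by blast
  obtain u x' where x: "u \<noteq> []" "x = map Inr u @ x'" "x' = [] \<or> isl (hd x')"
    using xy(2,4) by (rule Inr_syllable_decomp)
  have "\<not> isl (hd y)" using xy isl_hd_fp_eval[of x S T] isl_hd_fp_eval[of y S T] by simp
  with xy(3) obtain v y' where y: "v \<noteq> []" "y = map Inr v @ y'" "y' = [] \<or> isl (hd y')"
    by (rule Inr_syllable_decomp)
  have eq: "word_eval T u = word_eval T v" "fp_eval S T x' = fp_eval S T y'"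
    using xy(7) x y by (simp_all add: fp_eval_Inr_syllable)
  have sets: "set u \<subseteq> B" "set v \<subseteq> B" "set x' \<subseteq> Inl ` A \<union> Inr ` B" "set y' \<subseteq> Inl ` A \<union> Inr ` B"
    using xy(5,6) x(2) y(2) by auto
  have "marked u v \<in> WP T B" unfolding marked_in_WP_iff using x(1) y(1) sets eq(1) by blast
  moreover have "x' = [] \<longleftrightarrow> y' = []" using eq(2) by (metis fp_eval_eq_Nil_iff)
  then have "marked (singletons x') (singletons y') = [None] \<or>
      fp_equation S T A B True (marked (singletons x') (singletons y'))"
    using x(3) sets(3,4) eq(2) unfolding fp_equation_def by auto
  moreover have "w = map (Some \<circ> (\<lambda>a. [Inr a])) u @ marked (singletons x') (singletons y') @
      rev (map (Some \<circ> (\<lambda>a. [Inr a])) v)"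
    using xy(1) x(2) y(2) by (simp add: comp_def)
  ultimately show thesis by (rule that)
qed

lemma fp_equation_Inr_syllableI:
  assumes "marked u v \<in> WP T B" and "wm = [None] \<or> fp_equation S T A B True wm"
  shows "fp_equation S T A B False (map (Some \<circ> (\<lambda>a. [Inr a])) u @ wm @ rev (map (Some \<circ> (\<lambda>a. [Inr a])) v))"
proof -
  from marked_in_WP_iff[THEN iffD1, OF assms(1)] have uv: "u \<noteq> []" "v \<noteq> []" "set u \<subseteq> B"
    "set v \<subseteq> B" "word_eval T u = word_eval T v" by blast+
  from assms(2) obtain x' y' where xy': "wm = marked (singletons x') (singletons y')"
    "x' = [] \<and> y' = [] \<or> x' \<noteq> [] \<and> y' \<noteq> [] \<and> isl (hd x') \<and> isl (hd y')"
    "set x' \<subseteq> Inl ` A \<union> Inr ` B" "set y' \<subseteq> Inl ` A \<union> Inr ` B" "fp_eval S T x' = fp_eval S T y'"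
  proof
    assume "wm = [None]"
    then show thesis by (intro that[of "[]" "[]"]) simp_all
  next
    assume "fp_equation S T A B True wm"
    then obtain x' y' where "wm = marked (singletons x') (singletons y')" "x' \<noteq> []" "y' \<noteq> []"
      "isl (hd x')" "set x' \<subseteq> Inl ` A \<union> Inr ` B" "set y' \<subseteq> Inl ` A \<union> Inr ` B"
      "fp_eval S T x' = fp_eval S T y'"
      unfolding fp_equation_def by blast
    moreover from this have "isl (hd y')"
      using isl_hd_fp_eval[of x' S T] isl_hd_fp_eval[of y' S T] by simp
    ultimately show thesis by (intro that[of x' y']) auto
  qed
  from uv xy'(2,5) have "fp_eval S T (map Inr u @ x') = fp_eval S T (map Inr v @ y')"
    using fp_eval_Inr_syllable[of u x' S T] fp_eval_Inr_syllable[of v y' S T] by auto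
  moreover have "map (Some \<circ> (\<lambda>a. [Inr a])) u @ wm @ rev (map (Some \<circ> (\<lambda>a. [Inr a])) v) =
      marked (singletons (map Inr u @ x')) (singletons (map Inr v @ y'))"
    using xy'(1) by (simp add: comp_def)
  ultimately show ?thesis
    using uv xy'(3,4) unfolding fp_equation_def
    by (intro exI[of _ "map Inr u @ x'"] exI[of _ "map Inr v @ y'"]) (auto simp: neq_Nil_conv)
qed

lemma fp_equation_if_nested:
  fixes S :: "'a sgrp" and T :: "'b sgrp" and A :: "'a set" and B :: "'b set"
  shows "nested_L (WP S A) (\<lambda>a. [Inl a]) (WP T B) (\<lambda>b. [Inr b]) w \<Longrightarrow> fp_equation S T A B True w"
    and "nested_R (WP S A) (\<lambda>a. [Inl a]) (WP T B) (\<lambda>b. [Inr b]) w \<Longrightarrow> fp_equation S T A B False w"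
proof (induction rule: nested_L_nested_R.inducts)
  case (1 z ws)
  from 1(1) obtain u v where z: "z = marked u v" unfolding WP_def by blast
  have "\<exists>wm. (wm = [None] \<or> nested_R (WP S A) (\<lambda>a. [Inl a]) (WP T B) (\<lambda>b. [Inr b]) wm \<and>
      fp_equation S T A B False wm) \<and>
      concat ws = map (Some \<circ> (\<lambda>a. [Inl a])) u @ wm @ rev (map (Some \<circ> (\<lambda>a. [Inl a])) v)"
    by (rule concat_list_all2_marked[THEN iffD1]) (use 1(2) z in blast)
  then obtain wm where wm: "wm = [None] \<or> fp_equation S T A B False wm"
    "concat ws = map (Some \<circ> (\<lambda>a. [Inl a])) u @ wm @ rev (map (Some \<circ> (\<lambda>a. [Inl a])) v)"
    by blast
  from 1(1) wm(1) have "fp_equation S T A B True (map (Some \<circ> (\<lambda>a. [Inl a])) u @ wm @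
      rev (map (Some \<circ> (\<lambda>a. [Inl a])) v))"
    unfolding z by (rule fp_equation_Inl_syllableI)
  with wm(2) show ?case by simp
next
  case (2 z ws)
  from 2(1) obtain u v where z: "z = marked u v" unfolding WP_def by blast
  have "\<exists>wm. (wm = [None] \<or> nested_L (WP S A) (\<lambda>a. [Inl a]) (WP T B) (\<lambda>b. [Inr b]) wm \<and>
      fp_equation S T A B True wm) \<and>
      concat ws = map (Some \<circ> (\<lambda>a. [Inr a])) u @ wm @ rev (map (Some \<circ> (\<lambda>a. [Inr a])) v)"
    by (rule concat_list_all2_marked[THEN iffD1]) (use 2(2) z in blast)
  then obtain wm where wm: "wm = [None] \<or> fp_equation S T A B True wm"
    "concat ws = map (Some \<circ> (\<lambda>a. [Inr a])) u @ wm @ rev (map (Some \<circ> (\<lambda>a. [Inr a])) v)"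
    by blast
  from 2(1) wm(1) have "fp_equation S T A B False (map (Some \<circ> (\<lambda>a. [Inr a])) u @ wm @
      rev (map (Some \<circ> (\<lambda>a. [Inr a])) v))"
    unfolding z by (rule fp_equation_Inr_syllableI)
  with wm(2) show ?case by simp
qed

lemma nested_if_fp_equation:
  "fp_equation S T A B l w \<Longrightarrow>
    (if l then nested_L else nested_R) (WP S A) (\<lambda>a. [Inl a]) (WP T B) (\<lambda>b. [Inr b]) w"
proof (induction "length w" arbitrary: l w rule: less_induct)
  case less
  show ?case
  proof (cases l)
    case True
    with less.prems have "fp_equation S T A B True w" by simp
    then obtain u v wm where uv: "marked u v \<in> WP S A"
      and wm: "wm = [None] \<or> fp_equation S T A B False wm"
      and w: "w = map (Some \<circ> (\<lambda>a. [Inl a])) u @ wm @ rev (map (Some \<circ> (\<lambda>a. [Inl a])) v)"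
      by (rule fp_equation_Inl_syllableD)
    from uv have "u \<noteq> []" using marked_in_WP_iff by blast
    with w have "length wm < length w" by simp
    with wm less.hyps[of wm False]
    have "wm = [None] \<or> nested_R (WP S A) (\<lambda>a. [Inl a]) (WP T B) (\<lambda>b. [Inr b]) wm"
      by auto
    with uv have "nested_L (WP S A) (\<lambda>a. [Inl a]) (WP T B) (\<lambda>b. [Inr b]) w"
      unfolding w by (rule nested_L_marked)
    with True show ?thesis by simp
  next
    case False
    with less.prems have "fp_equation S T A B False w" by simp
    then obtain u v wm where uv: "marked u v \<in> WP T B"
      and wm: "wm = [None] \<or> fp_equation S T A B True wm"
      and w: "w = map (Some \<circ> (\<lambda>a. [Inr a])) u @ wm @ rev (map (Some \<circ> (\<lambda>a. [Inr a])) v)"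
      by (rule fp_equation_Inr_syllableD)
    from uv have "u \<noteq> []" using marked_in_WP_iff by blast
    with w have "length wm < length w" by simp
    with wm less.hyps[of wm True]
    have "wm = [None] \<or> nested_L (WP S A) (\<lambda>a. [Inl a]) (WP T B) (\<lambda>b. [Inr b]) wm"
      by auto
    with uv have "nested_R (WP S A) (\<lambda>a. [Inl a]) (WP T B) (\<lambda>b. [Inr b]) w"
      unfolding w by (rule nested_R_marked)
    with False show ?thesis by simp
  qed
qed

lemma WP_free_prod:
  "WP (free_prod S T) (fp_gens A B) =
    {w. nested_L (WP S A) (\<lambda>a. [Inl a]) (WP T B) (\<lambda>b. [Inr b]) w} \<union>
    {w. nested_R (WP S A) (\<lambda>a. [Inl a]) (WP T B) (\<lambda>b. [Inr b]) w}"
proof (intro set_eqI iffI)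
  fix w assume "w \<in> WP (free_prod S T) (fp_gens A B)"
  then obtain l where "fp_equation S T A B l w" unfolding WP_free_prod_iff_fp_equation ..
  then show "w \<in> {w. nested_L (WP S A) (\<lambda>a. [Inl a]) (WP T B) (\<lambda>b. [Inr b]) w} \<union>
      {w. nested_R (WP S A) (\<lambda>a. [Inl a]) (WP T B) (\<lambda>b. [Inr b]) w}"
    using nested_if_fp_equation[of S T A B l w] by (cases l) simp_all
next
  fix w assume "w \<in> {w. nested_L (WP S A) (\<lambda>a. [Inl a]) (WP T B) (\<lambda>b. [Inr b]) w} \<union>
    {w. nested_R (WP S A) (\<lambda>a. [Inl a]) (WP T B) (\<lambda>b. [Inr b]) w}"
  then have "fp_equation S T A B True w \<or> fp_equation S T A B False w"
    using fp_equation_if_nested by blast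
  then show "w \<in> WP (free_prod S T) (fp_gens A B)"
    unfolding WP_free_prod_iff_fp_equation by blast
qed

lemma U_CF_free_prod:
  assumes "U_CF S" and "U_CF T"
  shows "U_CF (free_prod S T)"
proof -
  from assms obtain A B where A: "finite A" "generates S A" "context_free (WP S A)"
    and B: "finite B" "generates T B" "context_free (WP T B)"
    unfolding U_CF_def by blast
  have "finite (fp_gens A B)" using A(1) B(1) by (simp add: fp_gens_def)
  moreover have "generates (free_prod S T) (fp_gens A B)"
    using A(2) B(2) by (rule generates_free_prod)
  moreover have "context_free (WP (free_prod S T) (fp_gens A B))"
    unfolding WP_free_prod using A(3) B(3) by (rule context_free_nested)
  ultimately show ?thesis unfolding U_CF_def by blast
qed

theorem mainTheorem9:
  fixes S :: "'a sgrp" and T :: "'b sgrp"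
  assumes "semigrp S" and "semigrp T"
  shows "U_CF (free_prod S T) \<longleftrightarrow> U_CF S \<and> U_CF T"
  using U_CF_free_factor_left U_CF_free_factor_right U_CF_free_prod by blast

end
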